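(* Suppose there is $a\in\{0,1\}$, with $\neg a=1-a$, such that both of the following hold: (1) $E\{Z_i\mid A_i=a\}<E\{Z_i\mid A_i=\neg a\}$; (2) $E\{R_i\mid A_i=a\}>E\{R_i\mid A_i=\neg a\}$. Then there exists $\epsilon_o>0$ such that $\hat\gamma(\epsilon_o)=0$ under $\mathscr{A}_{\epsilon_o}$, i.e. $\mathscr{A}_{\epsilon_o}$ is perfectly fair in the demographic parity sense.
   Context: There are $n$ individuals indexed by $\mathcal{N}=\{1,\dots,n\}$. Individual $i$ is described by a random tuple $(X_i,A_i,Y_i)$, with features $X_i\in\mathcal{X}$, protected attribute $A_i\in\{0,1\}$ and qualification state $Y_i\in\{0,1\}$; the tuples are i.i.d. with a common distribution $\mathsf{F}$. A fixed function $r:\mathcal{X}\to\mathcal{R}$ is given, with $\mathcal{R}\subset[0,1]$ finite, and $R_i=r(X_i)$. Both events $\{A_i=0\}$, $\{A_i=1\}$ are assumed to have positive probability. For $\epsilon\ge0$, the exponential mechanism $\mathscr{A}_\epsilon$ selects individual $i$ with probability $Z_{i,\epsilon}=\exp(\epsilon R_i/2)/\sum_{j=1}^n\exp(\epsilon R_j/2)$ given the scores, and the demographic parity gap is $\hat\gamma(\epsilon)=E\{Z_{i,\epsilon}\mid A_i=0\}-E\{Z_{i,\epsilon}\mid A_i=1\}$. With $N_{\max}=|\{i:R_i=\max_jR_j\}|$, let $Z_i=0$ if $R_i\ne\max_jR_j$ and $Z_i=1/N_{\max}$ otherwise. *)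

theory Defs
  imports "HOL-Probability.Probability"
begin

text \<open>A single individual's tuple is (X, A, Y) :: 'x \<times> bool \<times> bool, where the protected
attribute / qualification state value 1 is encoded as True and 0 as False.\<close>

definition joint :: "nat \<Rightarrow> ('x \<times> bool \<times> bool) measure \<Rightarrow> (nat \<Rightarrow> 'x \<times> bool \<times> bool) measure" where
  "joint n F = PiM {..<n} (\<lambda>_. F)"

definition score :: "('x \<Rightarrow> real) \<Rightarrow> (nat \<Rightarrow> 'x \<times> bool \<times> bool) \<Rightarrow> nat \<Rightarrow> real" where
  "score r \<omega> j = r (fst (\<omega> j))"

definition attr :: "(nat \<Rightarrow> 'x \<times> bool \<times> bool) \<Rightarrow> nat \<Rightarrow> bool" where
  "attr \<omega> j = fst (snd (\<omega> j))"

definition cond_exp_ev :: "'a measure \<Rightarrow> ('a \<Rightarrow> bool) \<Rightarrow> ('a \<Rightarrow> real) \<Rightarrow> real" where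
  "cond_exp_ev M P f =
     (\<integral>\<omega>. indicator {\<omega> \<in> space M. P \<omega>} \<omega> * f \<omega> \<partial>M) / measure M {\<omega> \<in> space M. P \<omega>}"

definition Zeps :: "('x \<Rightarrow> real) \<Rightarrow> nat \<Rightarrow> real \<Rightarrow> (nat \<Rightarrow> 'x \<times> bool \<times> bool) \<Rightarrow> nat \<Rightarrow> real" where
  "Zeps r n \<epsilon> \<omega> i =
     exp (\<epsilon> * score r \<omega> i / 2) / (\<Sum>j<n. exp (\<epsilon> * score r \<omega> j / 2))"

definition Zmax :: "('x \<Rightarrow> real) \<Rightarrow> nat \<Rightarrow> (nat \<Rightarrow> 'x \<times> bool \<times> bool) \<Rightarrow> nat \<Rightarrow> real" where
  "Zmax r n \<omega> i =
     (let m = Max (score r \<omega> ` {..<n}) in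
      if score r \<omega> i \<noteq> m then 0
      else 1 / real (card {j \<in> {..<n}. score r \<omega> j = m}))"

definition dp_gap :: "('x \<Rightarrow> real) \<Rightarrow> ('x \<times> bool \<times> bool) measure \<Rightarrow> nat \<Rightarrow> nat \<Rightarrow> real \<Rightarrow> real" where
  "dp_gap r F n i \<epsilon> =
     cond_exp_ev (joint n F) (\<lambda>\<omega>. attr \<omega> i = False) (\<lambda>\<omega>. Zeps r n \<epsilon> \<omega> i)
   - cond_exp_ev (joint n F) (\<lambda>\<omega>. attr \<omega> i = True) (\<lambda>\<omega>. Zeps r n \<epsilon> \<omega> i)"

end

(*
  Let g(eps) be the difference between the conditional selection probabilities of groups a and
  not a under the exponential mechanism. At eps = 0 everybody is selected with probability 1/n,
  so g(0) = 0; as eps tends to infinity the mechanism converges to uniform selection among the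
  maximal scores, so g has a negative limit by (1). Differentiating at 0 gives
  g'(0) = (n - 1)/(2 n^2) (E{R_i | A_i = a} - E{R_i | A_i = not a}), because the scores of the
  other individuals are independent of A_i and their contributions cancel; by (2) this is
  positive. Thus g is positive just right of 0, and the intermediate value theorem yields a root
  eps_o > 0. The demographic parity gap is g or -g.
*)

theory Submission
  imports Defs
begin

section \<open>The exponential mechanism on a fixed score profile\<close>

definition expmech :: "nat \<Rightarrow> real \<Rightarrow> (nat \<Rightarrow> real) \<Rightarrow> nat \<Rightarrow> real" where
  "expmech n \<epsilon> v i = exp (\<epsilon> * v i / 2) / (\<Sum>j<n. exp (\<epsilon> * v j / 2))"

definition uniform_argmax :: "nat \<Rightarrow> (nat \<Rightarrow> real) \<Rightarrow> nat \<Rightarrow> real" where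
  "uniform_argmax n v i =
     (let m = Max (v ` {..<n}) in
      if v i \<noteq> m then 0 else 1 / real (card {j \<in> {..<n}. v j = m}))"

lemma expmech_restrict: "i < n \<Longrightarrow> expmech n \<epsilon> (restrict v {..<n}) i = expmech n \<epsilon> v i"
  by (simp add: expmech_def)

lemma uniform_argmax_restrict: "i < n \<Longrightarrow> uniform_argmax n (restrict v {..<n}) i = uniform_argmax n v i"
proof -
  assume "i < n"
  have "restrict v {..<n} ` {..<n} = v ` {..<n}" by auto
  moreover have "{j \<in> {..<n}. restrict v {..<n} j = m} = {j \<in> {..<n}. v j = m}" for m by auto
  ultimately show ?thesis using \<open>i < n\<close> by (simp add: uniform_argmax_def)
qed

lemma uniform_argmax_Suc_0: "uniform_argmax (Suc 0) v 0 = 1"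
proof -
  have "{j. j = 0 \<and> v j = v 0} = {0}" by auto
  then show ?thesis by (simp add: uniform_argmax_def lessThan_Suc)
qed

lemma expmech_0: "expmech n 0 v i = 1 / real n"
  by (simp add: expmech_def)

lemma sum_exp_pos: "0 < (n::nat) \<Longrightarrow> 0 < (\<Sum>j<n. exp (f j :: real))"
  by (intro sum_pos) auto

lemma continuous_on_expmech:
  assumes "0 < n"
  shows "continuous_on T (\<lambda>\<epsilon>. expmech n \<epsilon> v i)"
proof -
  have "(\<Sum>j<n. exp (\<epsilon> * v j / 2)) \<noteq> 0" for \<epsilon>
    using sum_exp_pos[OF assms] by (metis less_irrefl)
  then show ?thesis
    unfolding expmech_def by (intro continuous_intros) auto
qed

lemma has_real_derivative_expmech_0:
  assumes "0 < n"
  shows "((\<lambda>\<epsilon>. expmech n \<epsilon> v i) has_real_derivative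
           (real n * v i - (\<Sum>j<n. v j)) / (2 * real n ^ 2)) (at 0)"
proof -
  have "((\<lambda>\<epsilon>. exp (\<epsilon> * v i / 2) / (\<Sum>j<n. exp (\<epsilon> * v j / 2))) has_real_derivative
          (v i / 2 * real n - (\<Sum>j<n. v j / 2)) / (real n * real n)) (at 0)"
    using assms by (auto intro!: derivative_eq_intros)
  then show ?thesis
    by (simp add: expmech_def power2_eq_square sum_divide_distrib[symmetric] field_simps)
qed

lemma expmech_eq_inverse_sum:
  "expmech n \<epsilon> v i = inverse (\<Sum>j<n. exp ((v j - v i) / 2 * \<epsilon>))"
proof -
  have "(\<Sum>j<n. exp (\<epsilon> * v j / 2)) = exp (\<epsilon> * v i / 2) * (\<Sum>j<n. exp ((v j - v i) / 2 * \<epsilon>))"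
    by (simp add: sum_distrib_left exp_add[symmetric] algebra_simps diff_divide_distrib)
  then show ?thesis by (simp add: expmech_def field_simps)
qed

lemma tendsto_exp_mult_at_top_neg: "c < 0 \<Longrightarrow> ((\<lambda>x::real. exp (c * x)) \<longlongrightarrow> 0) at_top"
  by (rule filterlim_compose[OF exp_at_bot filterlim_tendsto_neg_mult_at_bot[OF tendsto_const _ filterlim_ident]])

lemma filterlim_exp_mult_at_top_pos: "0 < c \<Longrightarrow> filterlim (\<lambda>x::real. exp (c * x)) at_top at_top"
  by (rule filterlim_compose[OF exp_at_top filterlim_tendsto_pos_mult_at_top[OF tendsto_const _ filterlim_ident]])

lemma tendsto_expmech_at_top:
  assumes "i < n"
  shows "((\<lambda>\<epsilon>. expmech n \<epsilon> v i) \<longlongrightarrow> uniform_argmax n v i) at_top"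
proof -
  define m where "m = Max (v ` {..<n})"
  have le_m: "v j \<le> m" if "j < n" for j
    unfolding m_def using that by (intro Max_ge) auto
  have "m \<in> v ` {..<n}"
    unfolding m_def using assms by (intro Max_in) auto
  then obtain k where k: "k < n" "v k = m" by auto
  let ?sum = "\<lambda>\<epsilon>. \<Sum>j<n. exp ((v j - v i) / 2 * \<epsilon>)"
  show ?thesis
  proof (cases "v i = m")
    case True
    have "((\<lambda>\<epsilon>. exp ((v j - v i) / 2 * \<epsilon>)) \<longlongrightarrow> (if v j = m then 1 else 0)) at_top"
      if "j < n" for j
    proof (cases "v j = m")
      case False
      then have "(v j - v i) / 2 < 0" using True le_m[OF that] by simp
      from tendsto_exp_mult_at_top_neg[OF this] show ?thesis using False by simp
    qed (use True in simp)
    then have "(?sum \<longlongrightarrow> (\<Sum>j<n. if v j = m then 1 else 0)) at_top"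
      by (intro tendsto_sum) auto
    moreover have "(\<Sum>j<n. if v j = m then 1 else 0 :: real) = real (card {j \<in> {..<n}. v j = m})"
      by (simp add: sum.If_cases Int_def)
    moreover have "card {j \<in> {..<n}. v j = m} \<noteq> 0"
      using assms True by (auto simp: card_eq_0_iff)
    ultimately have "((\<lambda>\<epsilon>. inverse (?sum \<epsilon>)) \<longlongrightarrow> inverse (real (card {j \<in> {..<n}. v j = m}))) at_top"
      by (intro tendsto_inverse) auto
    then show ?thesis
      using True by (simp add: expmech_eq_inverse_sum uniform_argmax_def m_def[symmetric] inverse_eq_divide)
  next
    case False
    then have "v i < m" using le_m[OF assms] by simp
    then have "filterlim (\<lambda>\<epsilon>. exp ((v k - v i) / 2 * \<epsilon>)) at_top at_top"
      using k by (intro filterlim_exp_mult_at_top_pos) simp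
    moreover have "exp ((v k - v i) / 2 * \<epsilon>) \<le> ?sum \<epsilon>" for \<epsilon>
      using k by (intro member_le_sum) auto
    ultimately have "filterlim ?sum at_top at_top"
      by (auto intro: filterlim_at_top_mono)
    then have "((\<lambda>\<epsilon>. inverse (?sum \<epsilon>)) \<longlongrightarrow> 0) at_top"
      by (rule tendsto_inverse_0_at_top)
    then show ?thesis
      using False by (simp add: expmech_eq_inverse_sum uniform_argmax_def m_def[symmetric])
  qed
qed

lemma exists_pos_root_if_deriv_pos_tendsto_neg:
  fixes g :: "real \<Rightarrow> real"
  assumes "continuous_on {0..} g" "g 0 = 0" "(g has_real_derivative D) (at 0)" "0 < D"
    and "(g \<longlongrightarrow> L) at_top" "L < 0"
  shows "\<exists>x>0. g x = 0"
proof -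
  obtain d where "0 < d" and d: "\<And>h. 0 < h \<Longrightarrow> h < d \<Longrightarrow> g 0 < g (0 + h)"
    using DERIV_pos_inc_right[OF assms(3,4)] by blast
  then have pos: "0 < g (d / 2)" using assms(2) by force
  obtain N where N: "\<And>x. N \<le> x \<Longrightarrow> g x < 0"
    using order_tendstoD(2)[OF assms(5,6)] by (auto simp: eventually_at_top_linorder)
  have neg: "g (max N d) < 0" by (rule N) simp
  have "continuous_on {d / 2..max N d} g"
    using \<open>0 < d\<close> by (intro continuous_on_subset[OF assms(1)]) auto
  then obtain x where "d / 2 \<le> x" "g x = 0"
    using IVT2'[of g "max N d" 0 "d / 2"] pos neg \<open>0 < d\<close> by force
  then show ?thesis using \<open>0 < d\<close> by (auto intro!: exI[of _ x])
qed
section \<open>Finitely-valued random variables and product measures\<close>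

lemma (in finite_measure) integral_indicator_mult_finite_range:
  fixes X :: "'a \<Rightarrow> 'b" and h :: "'b \<Rightarrow> real"
  assumes "finite S" "A \<in> sets M"
    and range: "\<And>\<omega>. \<omega> \<in> space M \<Longrightarrow> X \<omega> \<in> S"
    and level_sets: "\<And>v. v \<in> S \<Longrightarrow> {\<omega> \<in> space M. X \<omega> = v} \<in> sets M"
  shows "(\<integral>\<omega>. indicator A \<omega> * h (X \<omega>) \<partial>M) = (\<Sum>v\<in>S. h v * measure M {\<omega> \<in> A. X \<omega> = v})"
proof -
  have sets: "{\<omega> \<in> A. X \<omega> = v} \<in> sets M" if "v \<in> S" for v
  proof -
    have "{\<omega> \<in> A. X \<omega> = v} = A \<inter> {\<omega> \<in> space M. X \<omega> = v}"
      using sets.sets_into_space[OF assms(2)] by blast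
    then show ?thesis using assms(2) level_sets[OF that] by simp
  qed
  have "(\<integral>\<omega>. indicator A \<omega> * h (X \<omega>) \<partial>M) = (\<integral>\<omega>. (\<Sum>v\<in>S. h v * indicator {\<omega> \<in> A. X \<omega> = v} \<omega>) \<partial>M)"
  proof (intro Bochner_Integration.integral_cong refl)
    fix \<omega> assume "\<omega> \<in> space M"
    then show "indicator A \<omega> * h (X \<omega>) = (\<Sum>v\<in>S. h v * indicator {\<omega> \<in> A. X \<omega> = v} \<omega>)"
      using range assms(1) by (auto simp: indicator_def if_distrib[of "(*) _"] sum.delta' eq_commute[of "X _"] cong: conj_cong)
  qed
  also have "\<dots> = (\<Sum>v\<in>S. h v * measure M {\<omega> \<in> A. X \<omega> = v})"
    using sets
    by (subst Bochner_Integration.integral_sum)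
       (auto intro!: integrable_mult_right integrable_real_indicator simp: emeasure_finite less_top[symmetric])
  finally show ?thesis .
qed

lemma prod_if_two_points:
  fixes x y :: "'a :: comm_monoid_mult"
  assumes "finite I" "i \<in> I" "j \<in> I" "i \<noteq> j"
  shows "(\<Prod>k\<in>I. if k = i then x else if k = j then y else 1) = x * y"
proof -
  have "(\<Prod>k\<in>I. if k = i then x else if k = j then y else 1) = (\<Prod>k\<in>{i, j}. if k = i then x else if k = j then y else 1)"
    using assms by (intro prod.mono_neutral_right) auto
  then show ?thesis using assms(4) by simp
qed

lemma integral_PiM_two_components:
  fixes f g :: "'a \<Rightarrow> real"
  assumes "prob_space M" "finite I" "i \<in> I" "j \<in> I" "i \<noteq> j" "integrable M f" "integrable M g"
  shows "(\<integral>\<omega>. f (\<omega> i) * g (\<omega> j) \<partial>PiM I (\<lambda>_. M)) = integral\<^sup>L M f * integral\<^sup>L M g"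
proof -
  interpret product_prob_space "\<lambda>_. M" I by (intro product_prob_spaceI assms)
  define h where "h k = (if k = i then f else if k = j then g else (\<lambda>_. 1))" for k
  have "(\<integral>\<omega>. (\<Prod>k\<in>I. h k (\<omega> k)) \<partial>PiM I (\<lambda>_. M)) = (\<Prod>k\<in>I. integral\<^sup>L M (h k))"
    using assms by (intro product_integral_prod) (auto simp: h_def)
  moreover have "(\<Prod>k\<in>I. h k (\<omega> k)) = f (\<omega> i) * g (\<omega> j)" for \<omega>
  proof -
    have "(\<Prod>k\<in>I. h k (\<omega> k)) = (\<Prod>k\<in>I. if k = i then f (\<omega> i) else if k = j then g (\<omega> j) else 1)"
      by (intro prod.cong) (auto simp: h_def)
    then show ?thesis using prod_if_two_points[OF assms(2-5)] by simp
  qed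
  moreover have "(\<Prod>k\<in>I. integral\<^sup>L M (h k)) = integral\<^sup>L M f * integral\<^sup>L M g"
  proof -
    have "(\<Prod>k\<in>I. integral\<^sup>L M (h k))
        = (\<Prod>k\<in>I. if k = i then integral\<^sup>L M f else if k = j then integral\<^sup>L M g else 1)"
      by (intro prod.cong) (auto simp: h_def M.prob_space)
    then show ?thesis using prod_if_two_points[OF assms(2-5)] by simp
  qed
  ultimately show ?thesis by simp
qed

lemma measure_PiM_component:
  assumes "prob_space M" "i \<in> I" "A \<in> sets M"
  shows "measure (PiM I (\<lambda>_. M)) {\<omega> \<in> space (PiM I (\<lambda>_. M)). \<omega> i \<in> A} = measure M A"
proof -
  interpret product_prob_space "\<lambda>_. M" I by (intro product_prob_spaceI assms)
  show ?thesis using assms by (simp add: measure_def emeasure_PiM_Collect_single)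
qed

section \<open>Conditional means in an i.i.d. population\<close>

locale iid_population =
  fixes F :: "('x \<times> bool \<times> bool) measure" and r :: "'x \<Rightarrow> real" and Rset :: "real set" and n :: nat
  assumes prob_space_F: "prob_space F"
    and measurable_score: "(\<lambda>t. r (fst t)) \<in> borel_measurable F"
    and measurable_attr: "(\<lambda>t. fst (snd t)) \<in> measurable F (count_space UNIV)"
    and finite_Rset: "finite Rset"
    and score_in_Rset: "\<forall>t \<in> space F. r (fst t) \<in> Rset"
    and attr_prob_pos: "\<And>b. measure F {t \<in> space F. fst (snd t) = b} > 0"
begin

lemma finite_measure_F: "finite_measure F"
  using prob_space_F by (rule prob_space.finite_measure)

lemma sets_attr_eq: "{t \<in> space F. fst (snd t) = b} \<in> sets F"
  using measurable_sets[OF measurable_attr, of "{b}"] by (simp add: vimage_def Int_def conj_commute)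

lemma finite_measure_joint: "finite_measure (joint n F)"
  unfolding joint_def using prob_space_PiM[OF prob_space_F] by (rule prob_space.finite_measure)

definition group :: "nat \<Rightarrow> bool \<Rightarrow> (nat \<Rightarrow> 'x \<times> bool \<times> bool) set" where
  "group i b = {\<omega> \<in> space (joint n F). attr \<omega> i = b}"

text \<open>Restricting to \<open>{..<n}\<close> makes the score profile range over the finite set
  \<open>PiE {..<n} (\<lambda>_. Rset)\<close>.\<close>

definition score_vec :: "(nat \<Rightarrow> 'x \<times> bool \<times> bool) \<Rightarrow> nat \<Rightarrow> real" where
  "score_vec \<omega> = restrict (score r \<omega>) {..<n}"

definition cond_weight :: "nat \<Rightarrow> bool \<Rightarrow> (nat \<Rightarrow> real) \<Rightarrow> real" where
  "cond_weight i b v =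
     measure (joint n F) {\<omega> \<in> group i b. score_vec \<omega> = v} / measure (joint n F) (group i b)"

text \<open>\<open>cond_mean i b h\<close> is E{h(R_1, ..., R_n) | A_i = b}, written as a finite sum over score
  profiles, so that limits and derivatives in the privacy parameter pass through it termwise.\<close>

definition cond_mean :: "nat \<Rightarrow> bool \<Rightarrow> ((nat \<Rightarrow> real) \<Rightarrow> real) \<Rightarrow> real" where
  "cond_mean i b h = (\<Sum>v \<in> PiE {..<n} (\<lambda>_. Rset). h v * cond_weight i b v)"

lemma cond_mean_diff: "cond_mean i b (\<lambda>v. f v - g v) = cond_mean i b f - cond_mean i b g"
  unfolding cond_mean_def by (simp add: left_diff_distrib sum_subtractf)

lemma cond_mean_mult_left: "cond_mean i b (\<lambda>v. c * f v) = c * cond_mean i b f"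
  unfolding cond_mean_def by (simp add: sum_distrib_left mult.assoc)

lemma cond_mean_divide: "cond_mean i b (\<lambda>v. f v / c) = cond_mean i b f / c"
  unfolding cond_mean_def by (simp add: sum_divide_distrib)

lemma cond_mean_sum: "cond_mean i b (\<lambda>v. \<Sum>j\<in>J. f j v) = (\<Sum>j\<in>J. cond_mean i b (f j))"
  unfolding cond_mean_def sum_distrib_right by (rule sum.swap)

lemma component_in_space: "\<omega> \<in> space (joint n F) \<Longrightarrow> j < n \<Longrightarrow> \<omega> j \<in> space F"
  unfolding joint_def by (auto simp: space_PiM)

lemma measurable_component: "j < n \<Longrightarrow> (\<lambda>\<omega>. \<omega> j) \<in> measurable (joint n F) F"
  unfolding joint_def by (rule measurable_component_singleton) simp

lemma measurable_score_component [measurable]: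
  "j < n \<Longrightarrow> (\<lambda>\<omega>. score r \<omega> j) \<in> borel_measurable (joint n F)"
  unfolding score_def using measurable_compose[OF measurable_component measurable_score] .

lemma measurable_attr_component [measurable]:
  "j < n \<Longrightarrow> (\<lambda>\<omega>. attr \<omega> j) \<in> measurable (joint n F) (count_space UNIV)"
  unfolding attr_def using measurable_compose[OF measurable_component measurable_attr] .

lemma group_eq_component_preimage:
  "i < n \<Longrightarrow> group i b = {\<omega> \<in> space (joint n F). \<omega> i \<in> {t \<in> space F. fst (snd t) = b}}"
  unfolding group_def attr_def using component_in_space by auto

lemma sets_group: "i < n \<Longrightarrow> group i b \<in> sets (joint n F)"
  unfolding group_def by measurable

lemma measure_group: "i < n \<Longrightarrow> measure (joint n F) (group i b) = measure F {t \<in> space F. fst (snd t) = b}"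
  unfolding group_eq_component_preimage joint_def
  by (intro measure_PiM_component prob_space_F sets_attr_eq) simp

lemma cond_exp_ev_score_vec:
  assumes "i < n"
  shows "cond_exp_ev (joint n F) (\<lambda>\<omega>. attr \<omega> i = b) (\<lambda>\<omega>. h (score_vec \<omega>)) = cond_mean i b h"
proof -
  have "(\<integral>\<omega>. indicator (group i b) \<omega> * h (score_vec \<omega>) \<partial>joint n F)
      = (\<Sum>v \<in> PiE {..<n} (\<lambda>_. Rset). h v * measure (joint n F) {\<omega> \<in> group i b. score_vec \<omega> = v})"
  proof (rule finite_measure.integral_indicator_mult_finite_range[OF finite_measure_joint])
    show "finite (PiE {..<n} (\<lambda>_. Rset))" using finite_Rset by (simp add: finite_PiE)
    show "group i b \<in> sets (joint n F)" using assms by (rule sets_group)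
    show "score_vec \<omega> \<in> PiE {..<n} (\<lambda>_. Rset)" if "\<omega> \<in> space (joint n F)" for \<omega>
      using score_in_Rset component_in_space[OF that] by (auto simp: score_vec_def score_def)
    show "{\<omega> \<in> space (joint n F). score_vec \<omega> = v} \<in> sets (joint n F)"
      if "v \<in> PiE {..<n} (\<lambda>_. Rset)" for v
    proof -
      have "{\<omega> \<in> space (joint n F). score_vec \<omega> = v}
          = {\<omega> \<in> space (joint n F). \<forall>j\<in>{..<n}. score r \<omega> j = v j}"
        using that by (auto simp: score_vec_def fun_eq_iff PiE_iff extensional_def)
      also have "\<dots> \<in> sets (joint n F)" by measurable
      finally show ?thesis .
    qed
  qed
  then show ?thesis
    unfolding cond_exp_ev_def cond_mean_def cond_weight_def group_def by (simp add: sum_divide_distrib)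
qed

lemma cond_mean_const:
  assumes "i < n"
  shows "cond_mean i b (\<lambda>_. c) = c"
proof -
  have "cond_mean i b (\<lambda>_. c) = cond_exp_ev (joint n F) (\<lambda>\<omega>. attr \<omega> i = b) (\<lambda>_. c)"
    using cond_exp_ev_score_vec[OF assms, of b "\<lambda>_. c"] by simp
  also have "\<dots> = c * measure (joint n F) (group i b) / measure (joint n F) (group i b)"
    using sets_group[OF assms] unfolding cond_exp_ev_def group_def[symmetric]
    by (simp add: finite_measure.emeasure_finite[OF finite_measure_joint] less_top[symmetric])
  also have "\<dots> = c"
    using measure_group[OF assms] attr_prob_pos[of b] by simp
  finally show ?thesis .
qed

lemma integrable_score: "integrable F (\<lambda>t. r (fst t))"
proof (rule finite_measure.integrable_const_bound[OF finite_measure_F])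
  show "AE t in F. norm (r (fst t)) \<le> Max (abs ` Rset)"
    using score_in_Rset finite_Rset by (intro AE_I2) auto
qed (rule measurable_score)

lemma cond_mean_other_score:
  assumes "i < n" "j < n" "j \<noteq> i"
  shows "cond_mean i b (\<lambda>v. v j) = (\<integral>t. r (fst t) \<partial>F)"
proof -
  let ?A = "{t \<in> space F. fst (snd t) = b}"
  have "cond_mean i b (\<lambda>v. v j) = cond_exp_ev (joint n F) (\<lambda>\<omega>. attr \<omega> i = b) (\<lambda>\<omega>. score r \<omega> j)"
    using cond_exp_ev_score_vec[OF assms(1), of b "\<lambda>v. v j"] assms(2) by (simp add: score_vec_def)
  also have "\<dots> = (\<integral>\<omega>. indicator (group i b) \<omega> * score r \<omega> j \<partial>joint n F) / measure (joint n F) (group i b)"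
    unfolding cond_exp_ev_def group_def ..
  also have "(\<integral>\<omega>. indicator (group i b) \<omega> * score r \<omega> j \<partial>joint n F)
      = (\<integral>\<omega>. indicator ?A (\<omega> i) * r (fst (\<omega> j)) \<partial>joint n F)"
  proof (intro Bochner_Integration.integral_cong refl)
    fix \<omega> assume "\<omega> \<in> space (joint n F)"
    moreover from this have "\<omega> i \<in> space F" by (rule component_in_space[OF _ assms(1)])
    ultimately show "indicator (group i b) \<omega> * score r \<omega> j = indicator ?A (\<omega> i) * r (fst (\<omega> j))"
      by (simp add: group_def attr_def score_def indicator_def)
  qed
  also have "\<dots> = (\<integral>t. indicator ?A t \<partial>F) * (\<integral>t. r (fst t) \<partial>F)"
    unfolding joint_def using assms
    by (intro integral_PiM_two_components prob_space_F integrable_score)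
       (auto simp: sets_attr_eq finite_measure.emeasure_finite[OF finite_measure_F] less_top[symmetric])
  also have "(\<integral>t. indicator ?A t \<partial>F) = measure (joint n F) (group i b)"
    using sets_attr_eq measure_group[OF assms(1)]
    by (simp add: finite_measure.emeasure_finite[OF finite_measure_F] less_top[symmetric])
  finally show ?thesis
    using measure_group[OF assms(1)] attr_prob_pos[of b] by simp
qed

lemma cond_mean_expmech_slope:
  assumes "i < n"
  shows "cond_mean i b (\<lambda>v. (real n * v i - (\<Sum>j<n. v j)) / (2 * real n ^ 2))
       = (real n - 1) / (2 * real n ^ 2) * (cond_mean i b (\<lambda>v. v i) - (\<integral>t. r (fst t) \<partial>F))"
proof -
  let ?x = "cond_mean i b (\<lambda>v. v i)" and ?\<mu> = "\<integral>t. r (fst t) \<partial>F"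
  have "cond_mean i b (\<lambda>v. (real n * v i - (\<Sum>j<n. v j)) / (2 * real n ^ 2))
      = (real n * cond_mean i b (\<lambda>v. v i) - (\<Sum>j<n. cond_mean i b (\<lambda>v. v j))) / (2 * real n ^ 2)"
    by (simp only: cond_mean_divide cond_mean_diff cond_mean_mult_left cond_mean_sum)
  also have "(\<Sum>j<n. cond_mean i b (\<lambda>v. v j))
      = cond_mean i b (\<lambda>v. v i) + (\<Sum>j\<in>{..<n} - {i}. cond_mean i b (\<lambda>v. v j))"
    using assms by (subst sum.remove[of _ i]) auto
  also have "(\<Sum>j\<in>{..<n} - {i}. cond_mean i b (\<lambda>v. v j)) = (real n - 1) * ?\<mu>"
    using assms by (simp add: cond_mean_other_score of_nat_diff)
  also have "real n * ?x - (?x + (real n - 1) * ?\<mu>) = (real n - 1) * (?x - ?\<mu>)"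
    by (simp add: algebra_simps)
  finally show ?thesis by simp
qed

lemma cond_mean_expmech_0: "i < n \<Longrightarrow> cond_mean i b (\<lambda>v. expmech n 0 v i) = 1 / real n"
  by (simp add: expmech_0 cond_mean_const)

lemma continuous_on_cond_mean_expmech:
  "i < n \<Longrightarrow> continuous_on T (\<lambda>\<epsilon>. cond_mean i b (\<lambda>v. expmech n \<epsilon> v i))"
  unfolding cond_mean_def by (intro continuous_intros continuous_on_expmech) auto

lemma has_real_derivative_cond_mean_expmech:
  assumes "i < n"
  shows "((\<lambda>\<epsilon>. cond_mean i b (\<lambda>v. expmech n \<epsilon> v i)) has_real_derivative
           (real n - 1) / (2 * real n ^ 2) * (cond_mean i b (\<lambda>v. v i) - (\<integral>t. r (fst t) \<partial>F))) (at 0)"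
proof -
  have "((\<lambda>\<epsilon>. cond_mean i b (\<lambda>v. expmech n \<epsilon> v i)) has_real_derivative
          cond_mean i b (\<lambda>v. (real n * v i - (\<Sum>j<n. v j)) / (2 * real n ^ 2))) (at 0)"
    unfolding cond_mean_def using assms
    by (intro DERIV_sum DERIV_cmult_right has_real_derivative_expmech_0) auto
  then show ?thesis using cond_mean_expmech_slope[OF assms] by simp
qed

lemma tendsto_cond_mean_expmech:
  assumes "i < n"
  shows "((\<lambda>\<epsilon>. cond_mean i b (\<lambda>v. expmech n \<epsilon> v i)) \<longlongrightarrow> cond_mean i b (\<lambda>v. uniform_argmax n v i)) at_top"
  unfolding cond_mean_def by (intro tendsto_sum tendsto_mult_right tendsto_expmech_at_top assms)

lemma cond_exp_ev_Zeps:
  assumes "i < n"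
  shows "cond_exp_ev (joint n F) (\<lambda>\<omega>. attr \<omega> i = b) (\<lambda>\<omega>. Zeps r n \<epsilon> \<omega> i)
       = cond_mean i b (\<lambda>v. expmech n \<epsilon> v i)"
proof -
  have "Zeps r n \<epsilon> \<omega> i = expmech n \<epsilon> (score_vec \<omega>) i" for \<omega>
    unfolding score_vec_def expmech_restrict[OF assms] by (simp only: Zeps_def expmech_def)
  then show ?thesis using cond_exp_ev_score_vec[OF assms, of b "\<lambda>v. expmech n \<epsilon> v i"] by simp
qed

lemma cond_exp_ev_Zmax:
  assumes "i < n"
  shows "cond_exp_ev (joint n F) (\<lambda>\<omega>. attr \<omega> i = b) (\<lambda>\<omega>. Zmax r n \<omega> i)
       = cond_mean i b (\<lambda>v. uniform_argmax n v i)"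
proof -
  have "Zmax r n \<omega> i = uniform_argmax n (score_vec \<omega>) i" for \<omega>
    unfolding score_vec_def uniform_argmax_restrict[OF assms] by (simp only: Zmax_def uniform_argmax_def)
  then show ?thesis using cond_exp_ev_score_vec[OF assms, of b "\<lambda>v. uniform_argmax n v i"] by simp
qed

lemma cond_exp_ev_score:
  assumes "i < n"
  shows "cond_exp_ev (joint n F) (\<lambda>\<omega>. attr \<omega> i = b) (\<lambda>\<omega>. score r \<omega> i) = cond_mean i b (\<lambda>v. v i)"
  using cond_exp_ev_score_vec[OF assms, of b "\<lambda>v. v i"] assms by (simp add: score_vec_def)

lemma exists_pos_expmech_cond_means_eq:
  assumes "i < n"
    and argmax_less: "cond_mean i b (\<lambda>v. uniform_argmax n v i) < cond_mean i c (\<lambda>v. uniform_argmax n v i)"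
    and score_greater: "cond_mean i c (\<lambda>v. v i) < cond_mean i b (\<lambda>v. v i)"
  shows "\<exists>\<epsilon>>0. cond_mean i b (\<lambda>v. expmech n \<epsilon> v i) = cond_mean i c (\<lambda>v. expmech n \<epsilon> v i)"
proof -
  define g where "g \<epsilon> = cond_mean i b (\<lambda>v. expmech n \<epsilon> v i) - cond_mean i c (\<lambda>v. expmech n \<epsilon> v i)"
    for \<epsilon>
  have "2 \<le> n"
  proof (rule ccontr)
    assume "\<not> 2 \<le> n"
    with assms(1) have "n = Suc 0" "i = 0" by auto
    then have "uniform_argmax n v i = 1" for v by (simp add: uniform_argmax_Suc_0)
    with argmax_less show False by (simp add: cond_mean_const[OF assms(1)])
  qed
  let ?c = "(real n - 1) / (2 * real n ^ 2)" and ?\<mu> = "\<integral>t. r (fst t) \<partial>F"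
  have cont: "continuous_on {0..} g"
    unfolding g_def by (intro continuous_on_diff continuous_on_cond_mean_expmech assms(1))
  have g0: "g 0 = 0"
    unfolding g_def using assms(1) by (simp add: cond_mean_expmech_0)
  have "(g has_real_derivative
      ?c * (cond_mean i b (\<lambda>v. v i) - ?\<mu>) - ?c * (cond_mean i c (\<lambda>v. v i) - ?\<mu>)) (at 0)"
    unfolding g_def by (intro DERIV_diff has_real_derivative_cond_mean_expmech assms(1))
  then have deriv: "(g has_real_derivative ?c * (cond_mean i b (\<lambda>v. v i) - cond_mean i c (\<lambda>v. v i))) (at 0)"
    by (simp add: algebra_simps)
  have slope: "0 < ?c * (cond_mean i b (\<lambda>v. v i) - cond_mean i c (\<lambda>v. v i))"
    using \<open>2 \<le> n\<close> score_greater by simp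
  have lim: "(g \<longlongrightarrow> cond_mean i b (\<lambda>v. uniform_argmax n v i) - cond_mean i c (\<lambda>v. uniform_argmax n v i)) at_top"
    unfolding g_def by (intro tendsto_diff tendsto_cond_mean_expmech assms(1))
  have "\<exists>\<epsilon>>0. g \<epsilon> = 0"
    using argmax_less by (intro exists_pos_root_if_deriv_pos_tendsto_neg[OF cont g0 deriv slope lim]) simp
  then show ?thesis unfolding g_def by simp
qed
end

theorem theorem7:
  fixes F :: "('x \<times> bool \<times> bool) measure"
    and r :: "'x \<Rightarrow> real"
    and Rset :: "real set"
    and n i :: nat
    and a :: bool
  assumes F_prob: "prob_space F"
    and r_meas: "(\<lambda>t. r (fst t)) \<in> borel_measurable F"
    and A_meas: "(\<lambda>t. fst (snd t)) \<in> measurable F (count_space UNIV)"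
    and Rset_fin: "finite Rset"
    and Rset_unit: "Rset \<subseteq> {0..1}"
    and r_range: "\<forall>t \<in> space F. r (fst t) \<in> Rset"
    and A0_pos: "measure F {t \<in> space F. fst (snd t) = False} > 0"
    and A1_pos: "measure F {t \<in> space F. fst (snd t) = True} > 0"
    and i_idx: "i < n"
    and cond1: "cond_exp_ev (joint n F) (\<lambda>\<omega>. attr \<omega> i = a) (\<lambda>\<omega>. Zmax r n \<omega> i)
              < cond_exp_ev (joint n F) (\<lambda>\<omega>. attr \<omega> i = (\<not> a)) (\<lambda>\<omega>. Zmax r n \<omega> i)"
    and cond2: "cond_exp_ev (joint n F) (\<lambda>\<omega>. attr \<omega> i = a) (\<lambda>\<omega>. score r \<omega> i)
              > cond_exp_ev (joint n F) (\<lambda>\<omega>. attr \<omega> i = (\<not> a)) (\<lambda>\<omega>. score r \<omega> i)"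
  shows "\<exists>\<epsilon>o > 0. dp_gap r F n i \<epsilon>o = 0"
proof -
  have attr_pos: "measure F {t \<in> space F. fst (snd t) = b} > 0" for b
    using A0_pos A1_pos by (cases b) simp_all
  interpret iid_population F r Rset n
    using F_prob r_meas A_meas Rset_fin r_range attr_pos by (rule iid_population.intro)
  obtain \<epsilon> where "0 < \<epsilon>"
    and fair: "cond_mean i a (\<lambda>v. expmech n \<epsilon> v i) = cond_mean i (\<not> a) (\<lambda>v. expmech n \<epsilon> v i)"
    using exists_pos_expmech_cond_means_eq[OF i_idx] cond1 cond2
    unfolding cond_exp_ev_Zmax[OF i_idx] cond_exp_ev_score[OF i_idx] by blast
  have "dp_gap r F n i \<epsilon> = 0"
    using fair unfolding dp_gap_def cond_exp_ev_Zeps[OF i_idx] by (cases a) simp_all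
  with \<open>0 < \<epsilon>\<close> show ?thesis by blast
qed

end
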